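(* Let $n\ge 3$ and let $A=[a_{ij}]_{i,j=1}^{n-1}$ be a real $(n-1)\times(n-1)$ matrix with zero diagonal, with LOP objective function $f_A$ on $\Sigma_{n-1}$. Define the $n\times n$ matrix $A'=[a_{ij}]_{i,j=1}^{n}$ whose upper-left $(n-1)\times(n-1)$ block is $A$, with $a_{in}=-\sum_{j=1}^{n-1}(a_{ij}-a_{ji})$ for all $i=1,\dots,n-1$ and $a_{ni}=0$ for all $i=1,\dots,n$, and let $f_{A'}$ be its LOP objective function on $\Sigma_n$. Then $\sigma'=[i_1\ i_2\ \cdots\ i_{n-1}\ n]$ is a global maximum of $f_{A'}$ if and only if $\sigma=[i_1\ i_2\ \cdots\ i_{n-1}]$ is a global maximum of $f_A$.
   Context: For a real $m\times m$ matrix $M=[m_{ij}]$ the LOP objective function is $f_M(\sigma)=\sum_{k=1}^{m-1}\sum_{l=k+1}^m m_{\sigma(k)\sigma(l)}$ for $\sigma\in\Sigma_m$, the symmetric group on $\{1,\dots,m\}$; $[i_1\cdots i_m]$ denotes the permutation with $\sigma(k)=i_k$ (the index placed in position $k$). A global maximum (optimum) is a maximizer of the objective over $\Sigma_m$. *)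

theory Defs
  imports Complex_Main "HOL-Combinatorics.Permutations"
begin

text \<open>Matrices are functions nat => nat => real, indexed by 1..m.
  A permutation of {1..m} is a function sigma with sigma permutes {1..m};
  sigma k is the index placed in position k.\<close>

definition lop_obj :: "(nat \<Rightarrow> nat \<Rightarrow> real) \<Rightarrow> nat \<Rightarrow> (nat \<Rightarrow> nat) \<Rightarrow> real" where
  "lop_obj M m \<sigma> = (\<Sum>k = 1..m - 1. \<Sum>l = k + 1..m. M (\<sigma> k) (\<sigma> l))"

definition lop_global_max :: "(nat \<Rightarrow> nat \<Rightarrow> real) \<Rightarrow> nat \<Rightarrow> (nat \<Rightarrow> nat) \<Rightarrow> bool" where
  "lop_global_max M m \<sigma> \<longleftrightarrow> \<sigma> permutes {1..m} \<and>
     (\<forall>\<tau>. \<tau> permutes {1..m} \<longrightarrow> lop_obj M m \<tau> \<le> lop_obj M m \<sigma>)"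

definition ext_matrix :: "(nat \<Rightarrow> nat \<Rightarrow> real) \<Rightarrow> nat \<Rightarrow> nat \<Rightarrow> nat \<Rightarrow> real" where
  "ext_matrix A n i j =
     (if i \<le> n - 1 \<and> j \<le> n - 1 then A i j
      else if i \<le> n - 1 \<and> j = n then - (\<Sum>k = 1..n - 1. A i k - A k i)
      else 0)"

end

theory Submission
  imports Defs
begin

(* Write the objective through the position map pos = inv sigma: a pair (i, j) contributes
   M i j iff pos i < pos j.  If n sits at position p of an ordering of {1..n}, the last column
   of A' contributes the sum over the indices i placed before n of sum_j (a_ji - a_ij), and
   this is exactly the change of f_A caused by moving those indices, in their order, behind
   all the others.  So every value of f_A' is the value of f_A at a cyclic rotation of the
   ordering with n deleted; and when n is last, the indices before it are all of {1..n-1},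
   the antisymmetric correction sums to zero, and f_A'(sigma') = f_A(sigma). *)

definition lop_pos_obj :: "(nat \<Rightarrow> nat \<Rightarrow> real) \<Rightarrow> nat set \<Rightarrow> (nat \<Rightarrow> nat) \<Rightarrow> real" where
  "lop_pos_obj M I pos = (\<Sum>i\<in>I. \<Sum>j\<in>I. if pos i < pos j then M i j else 0)"

lemma lop_obj_eq_sum_ordered_pairs:
  "lop_obj M m \<sigma> = (\<Sum>k\<in>{1..m}. \<Sum>l\<in>{1..m}. if k < l then M (\<sigma> k) (\<sigma> l) else 0)"
proof -
  have inner: "(\<Sum>l\<in>{1..m}. if k < l then M (\<sigma> k) (\<sigma> l) else 0) = (\<Sum>l = k + 1..m. M (\<sigma> k) (\<sigma> l))"
    for k
  proof -
    have "{l \<in> {1..m}. k < l} = {k + 1..m}" by auto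
    then show ?thesis by (simp add: sum.inter_filter[symmetric])
  qed
  have "lop_obj M m \<sigma> = (\<Sum>k = 1..m. \<Sum>l = k + 1..m. M (\<sigma> k) (\<sigma> l))"
    unfolding lop_obj_def by (cases m) simp_all
  then show ?thesis by (simp only: inner)
qed

lemma sum_sum_permutes_reindex:
  assumes "\<sigma> permutes S"
  shows "(\<Sum>k\<in>S. \<Sum>l\<in>S. F (\<sigma> k) (\<sigma> l)) = (\<Sum>i\<in>S. \<Sum>j\<in>S. F i j)"
proof -
  note reindex = sum.reindex_bij_betw[OF permutes_imp_bij[OF assms]]
  have "(\<Sum>l\<in>S. F i (\<sigma> l)) = (\<Sum>j\<in>S. F i j)" for i
    by (rule reindex)
  then show ?thesis
    by (simp only: reindex[of "\<lambda>i. \<Sum>j\<in>S. F i j"])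
qed

lemma lop_obj_eq_lop_pos_obj:
  assumes "\<sigma> permutes {1..m}"
  shows "lop_obj M m \<sigma> = lop_pos_obj M {1..m} (inv \<sigma>)"
  using sum_sum_permutes_reindex[OF assms, of "\<lambda>i j. if inv \<sigma> i < inv \<sigma> j then M i j else 0"]
  by (simp add: lop_obj_eq_sum_ordered_pairs lop_pos_obj_def permutes_inverses(2)[OF assms])

lemma lop_pos_obj_cong:
  assumes "\<And>i j. i \<in> I \<Longrightarrow> j \<in> I \<Longrightarrow> pos i < pos j \<longleftrightarrow> pos' i < pos' j"
  shows "lop_pos_obj M I pos = lop_pos_obj M I pos'"
  unfolding lop_pos_obj_def using assms by (intro sum.cong) auto

lemma lop_pos_obj_eq_lop_obj:
  assumes "bij_betw pos {1..m} {1..m}"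
  obtains \<sigma> where "\<sigma> permutes {1..m}" "lop_pos_obj M {1..m} pos = lop_obj M m \<sigma>"
proof
  define pos' where "pos' x = (if x \<in> {1..m} then pos x else x)" for x
  have "bij_betw pos' {1..m} {1..m}"
    using assms by (rule bij_betw_cong[THEN iffD1, rotated]) (simp add: pos'_def)
  then have pos': "pos' permutes {1..m}"
    by (rule bij_imp_permutes) (auto simp: pos'_def)
  show "inv pos' permutes {1..m}"
    using pos' by (rule permutes_inv)
  show "lop_pos_obj M {1..m} pos = lop_obj M m (inv pos')"
    unfolding lop_obj_eq_lop_pos_obj[OF permutes_inv[OF pos']] permutes_inv_inv[OF pos']
    by (rule lop_pos_obj_cong) (simp add: pos'_def)
qed

lemma sum_antisymmetric_part_eq_0:
  fixes M :: "'a \<Rightarrow> 'a \<Rightarrow> 'b::ab_group_add"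
  shows "(\<Sum>i\<in>I. \<Sum>j\<in>I. M j i - M i j) = 0"
  by (simp add: sum_subtractf sum.swap[of "\<lambda>i j. M j i"])

(* For x, p in {1..n} this is (x - p) mod n. *)
definition cyclic_shift :: "nat \<Rightarrow> nat \<Rightarrow> nat \<Rightarrow> nat" where
  "cyclic_shift n p x = (if x < p then x + n - p else x - p)"

lemma cyclic_shift_less_iff:
  assumes "x \<in> {1..n}" "y \<in> {1..n}" "p \<le> n" "x \<noteq> p" "y \<noteq> p"
  shows "cyclic_shift n p x < cyclic_shift n p y \<longleftrightarrow>
    (if (x < p) = (y < p) then x < y else y < p)"
  using assms by (auto simp: cyclic_shift_def)

lemma bij_betw_cyclic_shift:
  assumes "p \<in> {1..n}"
  shows "bij_betw (cyclic_shift n p) ({1..n} - {p}) {1..n - 1}"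
proof -
  define unshift where "unshift y = (if y + p \<le> n then y + p else y + p - n)" for y
  show ?thesis
    by (rule bij_betw_byWitness[where f' = unshift])
      (use assms in \<open>auto simp: cyclic_shift_def unshift_def\<close>)
qed

lemma lop_pos_obj_rotate:
  assumes "finite I" "\<And>i. i \<in> I \<Longrightarrow> pos i \<noteq> p"
    and "\<And>i j. i \<in> I \<Longrightarrow> j \<in> I \<Longrightarrow>
      pos' i < pos' j \<longleftrightarrow> (if (pos i < p) = (pos j < p) then pos i < pos j else pos j < p)"
  shows "lop_pos_obj M I pos' =
    lop_pos_obj M I pos + (\<Sum>i\<in>{i\<in>I. pos i < p}. \<Sum>j\<in>I. M j i - M i j)"
proof -
  define s where "s i = (if pos i < p then 1 else 0 :: real)" for i
  have "(\<Sum>i\<in>{i\<in>I. pos i < p}. \<Sum>j\<in>I. M j i - M i j) = (\<Sum>i\<in>I. s i * (\<Sum>j\<in>I. M j i - M i j))"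
    unfolding sum.inter_filter[OF assms(1)] s_def by (intro sum.cong) auto
  also have "\<dots> = (\<Sum>i\<in>I. \<Sum>j\<in>I. s i * M j i - s i * M i j)"
    by (simp add: sum_distrib_left right_diff_distrib)
  also have "\<dots> = (\<Sum>i\<in>I. \<Sum>j\<in>I. s j * M i j - s i * M i j)"
    by (simp add: sum_subtractf sum.swap[of "\<lambda>i j. s i * M j i"])
  finally have "lop_pos_obj M I pos + (\<Sum>i\<in>{i\<in>I. pos i < p}. \<Sum>j\<in>I. M j i - M i j) =
    (\<Sum>i\<in>I. \<Sum>j\<in>I. (if pos i < pos j then M i j else 0) + s j * M i j - s i * M i j)"
    by (simp add: lop_pos_obj_def sum.distrib[symmetric] sum_subtractf)
  also have "\<dots> = lop_pos_obj M I pos'"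
    unfolding lop_pos_obj_def using assms(2,3) by (intro sum.cong refl) (auto simp: s_def)
  finally show ?thesis ..
qed

lemma lop_pos_obj_ext_matrix:
  "lop_pos_obj (ext_matrix A (Suc N)) {1..Suc N} pos =
    lop_pos_obj A {1..N} pos + (\<Sum>i\<in>{i\<in>{1..N}. pos i < pos (Suc N)}. \<Sum>j\<in>{1..N}. A j i - A i j)"
proof -
  let ?A' = "ext_matrix A (Suc N)"
  have split: "{1..Suc N} = insert (Suc N) {1..N}" by auto
  have upper_block: "?A' i j = A i j" if "i \<in> {1..N}" "j \<in> {1..N}" for i j
    using that by (simp add: ext_matrix_def)
  have last_column: "?A' i (Suc N) = (\<Sum>j\<in>{1..N}. A j i - A i j)" if "i \<in> {1..N}" for i
    using that by (simp add: ext_matrix_def sum_subtractf)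
  have last_row: "?A' (Suc N) j = 0" for j
    by (simp add: ext_matrix_def)
  have "lop_pos_obj ?A' {1..Suc N} pos =
    (\<Sum>i\<in>{1..N}. (if pos i < pos (Suc N) then ?A' i (Suc N) else 0) +
       (\<Sum>j\<in>{1..N}. if pos i < pos j then ?A' i j else 0))"
    unfolding lop_pos_obj_def split by (simp add: last_row cong: if_cong)
  also have "\<dots> = (\<Sum>i\<in>{1..N}. (if pos i < pos (Suc N) then \<Sum>j\<in>{1..N}. A j i - A i j else 0)) +
       lop_pos_obj A {1..N} pos"
    unfolding lop_pos_obj_def sum.distrib
    by (intro arg_cong2[where f = "(+)"] sum.cong refl) (auto simp: last_column upper_block)
  finally show ?thesis
    unfolding sum.inter_filter[OF finite_atLeastAtMost] by linarith
qed

lemma lop_obj_ext_matrix_of_permutes: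
  assumes "\<sigma> permutes {1..N}"
  shows "lop_obj (ext_matrix A (Suc N)) (Suc N) \<sigma> = lop_obj A N \<sigma>"
proof -
  have inv_\<sigma>: "inv \<sigma> permutes {1..N}"
    using assms by (rule permutes_inv)
  have "inv \<sigma> (Suc N) = Suc N"
    using inv_\<sigma> by (rule permutes_not_in) simp
  moreover have "inv \<sigma> i \<in> {1..N}" if "i \<in> {1..N}" for i
    using permutes_in_image[OF inv_\<sigma>] that by simp
  ultimately have all_before_last: "{i \<in> {1..N}. inv \<sigma> i < inv \<sigma> (Suc N)} = {1..N}"
    by fastforce
  have "\<sigma> permutes {1..Suc N}"
    using assms by (rule permutes_subset) auto
  then have "lop_obj (ext_matrix A (Suc N)) (Suc N) \<sigma> =
      lop_pos_obj (ext_matrix A (Suc N)) {1..Suc N} (inv \<sigma>)"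
    by (rule lop_obj_eq_lop_pos_obj)
  also have "\<dots> = lop_pos_obj A {1..N} (inv \<sigma>) + (\<Sum>i\<in>{1..N}. \<Sum>j\<in>{1..N}. A j i - A i j)"
    unfolding lop_pos_obj_ext_matrix all_before_last ..
  also have "\<dots> = lop_obj A N \<sigma>"
    by (simp add: sum_antisymmetric_part_eq_0 lop_obj_eq_lop_pos_obj[OF assms])
  finally show ?thesis .
qed

lemma lop_obj_ext_matrix_eq_rotation:
  assumes "\<tau> permutes {1..Suc N}"
  obtains \<rho> where "\<rho> permutes {1..N}" "lop_obj (ext_matrix A (Suc N)) (Suc N) \<tau> = lop_obj A N \<rho>"
proof -
  define pos where "pos = inv \<tau>"
  define p where "p = pos (Suc N)"
  define pos' where "pos' = cyclic_shift (Suc N) p \<circ> pos"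
  have pos: "pos permutes {1..Suc N}"
    unfolding pos_def using assms by (rule permutes_inv)
  have p: "p \<in> {1..Suc N}"
    unfolding p_def permutes_in_image[OF pos] by simp
  have "bij_betw pos ({1..Suc N} - {Suc N}) ({1..Suc N} - {p})"
    using p unfolding p_def by (intro bij_betw_DiffI[OF permutes_imp_bij[OF pos]]) auto
  moreover have "{1..Suc N} - {Suc N} = {1..N}"
    by auto
  ultimately have pos_bij: "bij_betw pos {1..N} ({1..Suc N} - {p})"
    by simp
  then have "bij_betw pos' {1..N} {1..N}"
    unfolding pos'_def using bij_betw_trans bij_betw_cyclic_shift[OF p] by fastforce
  then obtain \<rho> where \<rho>: "\<rho> permutes {1..N}" "lop_pos_obj A {1..N} pos' = lop_obj A N \<rho>"
    by (rule lop_pos_obj_eq_lop_obj)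
  have pos_range: "pos i \<in> {1..Suc N} - {p}" if "i \<in> {1..N}" for i
    using bij_betwE[OF pos_bij] that by blast
  have "lop_obj (ext_matrix A (Suc N)) (Suc N) \<tau> = lop_pos_obj (ext_matrix A (Suc N)) {1..Suc N} pos"
    unfolding pos_def by (rule lop_obj_eq_lop_pos_obj[OF assms])
  also have "\<dots> = lop_pos_obj A {1..N} pos + (\<Sum>i\<in>{i\<in>{1..N}. pos i < p}. \<Sum>j\<in>{1..N}. A j i - A i j)"
    unfolding p_def by (rule lop_pos_obj_ext_matrix)
  also have "\<dots> = lop_pos_obj A {1..N} pos'"
    using pos_range p
    by (intro lop_pos_obj_rotate[symmetric]) (auto simp: pos'_def cyclic_shift_less_iff)
  finally show ?thesis
    using that \<rho> by simp
qed

theorem proposition4: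
  fixes n :: nat and A :: "nat \<Rightarrow> nat \<Rightarrow> real" and \<sigma> :: "nat \<Rightarrow> nat"
  assumes "n \<ge> 3"
    and "\<forall>i \<in> {1..n - 1}. A i i = 0"
    and "\<sigma> permutes {1..n - 1}"
  shows "lop_global_max (ext_matrix A n) n (\<lambda>k. if k = n then n else \<sigma> k)
           \<longleftrightarrow> lop_global_max A (n - 1) \<sigma>"
proof -
  \<comment> \<open>The zero diagonal is never used: diagonal entries do not enter any LOP objective.\<close>
  obtain N where n: "n = Suc N"
    using assms(1) by (cases n) auto
  let ?f' = "lop_obj (ext_matrix A (Suc N)) (Suc N)"
  have \<sigma>: "\<sigma> permutes {1..N}"
    using assms(3) by (simp add: n)
  have extend: "\<tau> permutes {1..Suc N}" if "\<tau> permutes {1..N}" for \<tau>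
    using that by (rule permutes_subset) auto
  have "(\<lambda>k. if k = n then n else \<sigma> k) = \<sigma>"
    using permutes_not_in[OF \<sigma>, of n] by (auto simp: n)
  moreover have "(\<forall>\<tau>. \<tau> permutes {1..Suc N} \<longrightarrow> ?f' \<tau> \<le> ?f' \<sigma>) \<longleftrightarrow>
      (\<forall>\<rho>. \<rho> permutes {1..N} \<longrightarrow> lop_obj A N \<rho> \<le> lop_obj A N \<sigma>)"
    unfolding lop_obj_ext_matrix_of_permutes[OF \<sigma>]
    by (metis extend lop_obj_ext_matrix_of_permutes lop_obj_ext_matrix_eq_rotation)
  ultimately show ?thesis
    unfolding lop_global_max_def n using \<sigma> extend by simp
qed

end
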